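(* For every $n\ge1$ there is a bijection $\sigma\mapsto\sigma'$ from $\mathcal{W}^*_{2n+1}$ onto $\mathcal{X}_{2n}$ such that $\mathrm{des}(\sigma')=\mathrm{des}(\sigma)$. In particular $\sum_{\sigma\in\mathcal{W}^*_{2n+1}}t^{\mathrm{des}(\sigma)}=\sum_{\sigma\in\mathcal{X}_{2n}}t^{\mathrm{des}(\sigma)}$.
   Context: For $\sigma\in\mathfrak{S}_m$ (permutations of $[m]$), a descent is an index $i$ with $\sigma_i>\sigma_{i+1}$, with descent pair $(\sigma_i,\sigma_{i+1})$; $\mathrm{des}(\sigma)$ is the number of descents. $\mathcal{X}_{2n}$ is the set of permutations of $[2n]$ whose every descent pair has even first entry and odd second entry. $\mathcal{W}^*_{2n+1}$ is the set of permutations of $[2n+1]$ whose every descent pair consists of two odd entries and whose last entry is odd. *)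

theory Defs
  imports Main
begin

text \<open>Permutations of [m] are represented in one-line notation as lists
  sigma = [sigma_1, ..., sigma_m] (0-indexed in Isabelle).\<close>

definition perms :: "nat \<Rightarrow> nat list set" where
  "perms m = {xs. distinct xs \<and> set xs = {1..m}}"

definition descents :: "nat list \<Rightarrow> nat set" where
  "descents xs = {i. Suc i < length xs \<and> xs ! i > xs ! Suc i}"

definition des :: "nat list \<Rightarrow> nat" where
  "des xs = card (descents xs)"

definition X_set :: "nat \<Rightarrow> nat list set" where
  "X_set n = {xs \<in> perms (2*n). \<forall>i\<in>descents xs. even (xs ! i) \<and> odd (xs ! Suc i)}"

definition Wstar_set :: "nat \<Rightarrow> nat list set" where
  "Wstar_set n = {xs \<in> perms (2*n+1). (\<forall>i\<in>descents xs. odd (xs ! i) \<and> odd (xs ! Suc i))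
                   \<and> odd (last xs)}"

end

theory Submission
  imports Defs "HOL-Library.Multiset"
begin

(* The bijection passes through a chain of intermediate classes. Call a permutation w of
   {0, ..., 2n+1} a word of stage k (0 <= k <= n) if it starts with 0, ends with an odd letter larger than 2k, and every
   descent x > y has y odd and x either odd and larger than 2k or even and at most 2k. Prepending 0
   identifies W*_{2n+1} with stage 0, and framing by 0 and 2n+1 identifies X_{2n} with stage n,
   without changing descents.
   From stage k-1 to stage k only the letters a = 2k-1 and b = 2k change their status: a may no
   longer start a descent and b now may. The map stage_up a b repairs a word locally, by leaving
   it alone, swapping a and b, or relocating a maximal run of letters larger than b next to one
   of them; each case keeps the number of descents, and stage_down a b undoes it. Composing the
   n steps gives the bijection. *)

section \<open>Counting descents\<close>

fun desc_count :: "nat list \<Rightarrow> nat" where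
  "desc_count [] = 0"
| "desc_count [x] = 0"
| "desc_count (x # y # zs) = (if y < x then 1 else 0) + desc_count (y # zs)"

lemma desc_count_Cons:
  "desc_count (x # xs) = desc_count xs + (if xs \<noteq> [] \<and> hd xs < x then 1 else 0)"
  by (cases xs) auto

lemma desc_count_append:
  "desc_count (xs @ ys) =
     desc_count xs + desc_count ys + (if xs \<noteq> [] \<and> ys \<noteq> [] \<and> hd ys < last xs then 1 else 0)"
  by (induction xs rule: induct_list012) (auto simp: desc_count_Cons)

lemma descents_Cons:
  "descents (x # xs) = (if xs \<noteq> [] \<and> hd xs < x then {0} else {}) \<union> Suc ` descents xs"
proof (rule set_eqI)
  fix i
  show "i \<in> descents (x # xs) \<longleftrightarrow> i \<in> (if xs \<noteq> [] \<and> hd xs < x then {0} else {}) \<union> Suc ` descents xs"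
    by (cases i; cases xs) (auto simp: descents_def)
qed

lemma finite_descents: "finite (descents xs)"
  unfolding descents_def by (rule finite_subset[of _ "{..<length xs}"]) auto

lemma des_eq_desc_count: "des xs = desc_count xs"
proof (induction xs)
  case Nil
  then show ?case by (simp add: des_def descents_def)
next
  case (Cons x xs)
  have "0 \<notin> Suc ` descents xs" by auto
  then have "card (descents (x # xs)) = (if xs \<noteq> [] \<and> hd xs < x then 1 else 0) + card (Suc ` descents xs)"
    unfolding descents_Cons using finite_descents by (auto simp: card_insert_if)
  also have "card (Suc ` descents xs) = card (descents xs)" by (simp add: card_image)
  finally show ?case using Cons by (simp add: des_def desc_count_Cons)
qed

definition split_at :: "'a \<Rightarrow> 'a list \<Rightarrow> 'a list \<times> 'a list" where
  "split_at x xs = (takeWhile (\<lambda>y. y \<noteq> x) xs, tl (dropWhile (\<lambda>y. y \<noteq> x) xs))"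

lemma split_at_append_Cons: "x \<notin> set ys \<Longrightarrow> split_at x (ys @ x # zs) = (ys, zs)"
proof -
  assume "x \<notin> set ys"
  then have "takeWhile (\<lambda>y. y \<noteq> x) (ys @ x # zs) = ys" "dropWhile (\<lambda>y. y \<noteq> x) (ys @ x # zs) = x # zs"
    by (subst takeWhile_append2 dropWhile_append2; auto)+
  then show ?thesis unfolding split_at_def by simp
qed

lemma takeWhile_dropWhile_split:
  "X = takeWhile P X @ dropWhile P X" "\<forall>x\<in>set (takeWhile P X). P x"
  "dropWhile P X = [] \<or> \<not> P (hd (dropWhile P X))"
  using hd_dropWhile[of P X] by (auto dest: set_takeWhileD)

lemma takeWhile_dropWhile_append:
  assumes "\<forall>x\<in>set G. P x" and "V = [] \<or> \<not> P (hd V)"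
  shows "takeWhile P (G @ V) = G" "dropWhile P (G @ V) = V"
  using assms by (cases V; simp add: takeWhile_tail dropWhile_append3)+

lemma rev_takeWhile_dropWhile_split:
  fixes P :: "'a \<Rightarrow> bool" and X :: "'a list"
  defines "G \<equiv> rev (takeWhile P (rev X))" and "V \<equiv> rev (dropWhile P (rev X))"
  shows "X = V @ G" "\<forall>x\<in>set G. P x" "V = [] \<or> \<not> P (last V)"
  using takeWhile_dropWhile_split[where X="rev X" and P=P] unfolding G_def V_def
  by (metis rev_append rev_rev_ident, simp, metis last_rev rev_is_Nil_conv)

lemma rev_takeWhile_dropWhile_append:
  assumes "\<forall>x\<in>set G. P x" and "V = [] \<or> \<not> P (last V)"
  shows "rev (takeWhile P (rev (V @ G))) = G" "rev (dropWhile P (rev (V @ G))) = V"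
  using assms takeWhile_dropWhile_append[of "rev G" P "rev V"] by (simp_all add: hd_rev)

lemma successively_append_Cons_Cons_iff:
  "successively P (X1 @ x # X2 @ y # X3) \<longleftrightarrow>
     successively P X1 \<and> (X1 \<noteq> [] \<longrightarrow> P (last X1) x) \<and> P x (hd (X2 @ [y])) \<and>
     successively P X2 \<and> P (last (x # X2)) y \<and> successively P X3 \<and> (X3 \<noteq> [] \<longrightarrow> P y (hd X3))"
  by (cases X2; cases X3) (auto simp: successively_append_iff successively_Cons)

lemma split_list_two:
  assumes "a \<in> set w" "b \<in> set w" "a \<noteq> b"
  obtains X1 X2 X3 where "w = X1 @ a # X2 @ b # X3" | X1 X2 X3 where "w = X1 @ b # X2 @ a # X3"
proof -
  obtain P Q where w: "w = P @ a # Q" using split_list[OF assms(1)] by blast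
  show thesis
  proof (cases "b \<in> set Q")
    case True
    then obtain Q1 Q2 where "Q = Q1 @ b # Q2" using split_list by metis
    then show thesis using that(1) w by auto
  next
    case False
    then have "b \<in> set P" using assms w by auto
    then obtain P1 P2 where "P = P1 @ b # P2" using split_list by metis
    then show thesis using that(2) w by auto
  qed
qed

section \<open>Stages and the step maps\<close>

definition descent_top :: "nat \<Rightarrow> nat \<Rightarrow> bool" where
  "descent_top k x \<longleftrightarrow> (odd x \<and> 2*k < x) \<or> (even x \<and> x \<le> 2*k)"

definition admissible :: "nat \<Rightarrow> nat \<Rightarrow> nat \<Rightarrow> bool" where
  "admissible k x y \<longleftrightarrow> x < y \<or> (odd y \<and> descent_top k x)"

definition stage :: "nat \<Rightarrow> nat \<Rightarrow> nat list set" where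
  "stage n k = {w. distinct w \<and> set w = {0..2*n+1} \<and> w \<noteq> [] \<and> hd w = 0
                  \<and> successively (admissible k) w \<and> odd (last w) \<and> 2*k < last w}"

definition swap_letters :: "nat \<Rightarrow> nat \<Rightarrow> nat list \<Rightarrow> nat list" where
  "swap_letters a b w = map (\<lambda>x. if x = a then b else if x = b then a else x) w"

definition stage_up :: "nat \<Rightarrow> nat \<Rightarrow> nat list \<Rightarrow> nat list" where
  "stage_up a b w = (let A1 = fst (split_at a w); A2 = snd (split_at a w);
                         B1 = fst (split_at b w); B2 = snd (split_at b w) in
    if A2 \<noteq> [] \<and> a < hd A2 then w
    else if a \<in> set B1 then
      (let X2 = fst (split_at b A2) in
       if last A1 < a then swap_letters a b w
       else (let G = takeWhile (\<lambda>x. b < x) B2; V = dropWhile (\<lambda>x. b < x) B2 in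
         if V \<noteq> [] then A1 @ a # G @ X2 @ b # V else A1 @ a # b # X2 @ B2))
    else
      (let X2 = fst (split_at a B2); G = takeWhile (\<lambda>x. b < x) X2; V = dropWhile (\<lambda>x. b < x) X2 in
       if last A1 < a then (if A2 \<noteq> [] then swap_letters a b w else B1 @ a # b # V @ G)
       else B1 @ b # V @ a # G @ A2))"

definition stage_down :: "nat \<Rightarrow> nat \<Rightarrow> nat list \<Rightarrow> nat list" where
  "stage_down a b v = (let A1 = fst (split_at a v); A2 = snd (split_at a v);
                           B1 = fst (split_at b v); B2 = snd (split_at b v) in
    if B2 \<noteq> [] \<and> b < hd B2 then v
    else if b \<in> set A1 then
      (if last A1 < a then swap_letters a b v
       else (let Y = fst (split_at a B2); G = takeWhile (\<lambda>x. b < x) A2; R = dropWhile (\<lambda>x. b < x) A2 in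
          B1 @ b # G @ Y @ a # R))
    else
      (let Y = fst (split_at b A2) in
       if Y = [] then
         (let G = rev (takeWhile (\<lambda>x. b < x) (rev B2)); V = rev (dropWhile (\<lambda>x. b < x) (rev B2)) in
          if last A1 < a then A1 @ b # G @ V @ [a] else A1 @ a # V @ b # G)
       else if last A1 < a then swap_letters a b v
       else (let G = takeWhile (\<lambda>x. b < x) Y; Y' = dropWhile (\<lambda>x. b < x) Y in
          A1 @ a # Y' @ b # G @ B2)))"

lemma swap_letters_append:
  assumes "a \<noteq> b" "a \<notin> set X1" "b \<notin> set X1" "a \<notin> set X2" "b \<notin> set X2" "a \<notin> set X3" "b \<notin> set X3"
  shows "swap_letters a b (X1 @ a # X2 @ b # X3) = X1 @ b # X2 @ a # X3"
        "swap_letters a b (X1 @ b # X2 @ a # X3) = X1 @ a # X2 @ b # X3"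
proof -
  have "map (\<lambda>x. if x = a then b else if x = b then a else x) xs = xs" if "a \<notin> set xs" "b \<notin> set xs" for xs
    using that by (intro map_idI) auto
  then show "swap_letters a b (X1 @ a # X2 @ b # X3) = X1 @ b # X2 @ a # X3"
            "swap_letters a b (X1 @ b # X2 @ a # X3) = X1 @ a # X2 @ b # X3"
    unfolding swap_letters_def using assms by simp_all
qed

context
  fixes a b :: nat and X1 X2 X3 :: "nat list"
  assumes ab: "a < b"
    and notin: "a \<notin> set X1" "b \<notin> set X1" "a \<notin> set X2" "b \<notin> set X2" "a \<notin> set X3" "b \<notin> set X3"
begin

lemma split_at_ab:
  "split_at a (X1 @ a # X2 @ b # X3) = (X1, X2 @ b # X3)"
  "split_at b (X1 @ a # X2 @ b # X3) = (X1 @ a # X2, X3)"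
  using ab notin split_at_append_Cons[of a X1 "X2 @ b # X3"] split_at_append_Cons[of b "X1 @ a # X2" X3]
  by auto

lemma split_at_ba:
  "split_at a (X1 @ b # X2 @ a # X3) = (X1 @ b # X2, X3)"
  "split_at b (X1 @ b # X2 @ a # X3) = (X1, X2 @ a # X3)"
  using ab notin split_at_append_Cons[of a "X1 @ b # X2" X3] split_at_append_Cons[of b X1 "X2 @ a # X3"]
  by auto

lemmas swap_ab = swap_letters_append[OF less_imp_neq[OF ab] notin]

lemma stage_up_ab_fix:
  "a < hd (X2 @ [b]) \<Longrightarrow> stage_up a b (X1 @ a # X2 @ b # X3) = X1 @ a # X2 @ b # X3"
  using ab unfolding stage_up_def split_at_ab Let_def by (cases X2) auto

lemma stage_up_ab_swap:
  "X2 \<noteq> [] \<Longrightarrow> hd X2 < a \<Longrightarrow> last X1 < a \<Longrightarrow>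
   stage_up a b (X1 @ a # X2 @ b # X3) = X1 @ b # X2 @ a # X3"
  using ab notin unfolding stage_up_def split_at_ab Let_def by (auto simp: split_at_append_Cons swap_ab)

lemma stage_up_ab_move:
  "X2 \<noteq> [] \<Longrightarrow> hd X2 < a \<Longrightarrow> \<not> last X1 < a \<Longrightarrow> X3 = G @ V \<Longrightarrow> \<forall>x\<in>set G. b < x \<Longrightarrow>
   V \<noteq> [] \<Longrightarrow> \<not> b < hd V \<Longrightarrow> stage_up a b (X1 @ a # X2 @ b # X3) = X1 @ a # G @ X2 @ b # V"
  using ab notin takeWhile_dropWhile_append[of G "\<lambda>x. b < x" V]
  unfolding stage_up_def split_at_ab Let_def by (auto simp: split_at_append_Cons)

lemma stage_up_ab_join:
  "X2 \<noteq> [] \<Longrightarrow> hd X2 < a \<Longrightarrow> \<not> last X1 < a \<Longrightarrow> \<forall>x\<in>set X3. b < x \<Longrightarrow>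
   stage_up a b (X1 @ a # X2 @ b # X3) = X1 @ a # b # X2 @ X3"
  using ab notin takeWhile_dropWhile_append[of X3 "\<lambda>x. b < x" "[]"]
  unfolding stage_up_def split_at_ab Let_def by (auto simp: split_at_append_Cons)

lemma stage_down_ab_fix:
  "X3 \<noteq> [] \<Longrightarrow> b < hd X3 \<Longrightarrow> stage_down a b (X1 @ a # X2 @ b # X3) = X1 @ a # X2 @ b # X3"
  using ab unfolding stage_down_def split_at_ab Let_def by auto

lemma stage_down_ab_to_end:
  "\<not> (X3 \<noteq> [] \<and> b < hd X3) \<Longrightarrow> X2 = [] \<Longrightarrow> X3 = V @ G \<Longrightarrow> \<forall>x\<in>set G. b < x \<Longrightarrow>
   (V = [] \<or> \<not> b < last V) \<Longrightarrow> last X1 < a \<Longrightarrow>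
   stage_down a b (X1 @ a # X2 @ b # X3) = X1 @ b # G @ V @ [a]"
  using ab notin rev_takeWhile_dropWhile_append[of G "\<lambda>x. b < x" V] split_at_append_Cons[of b "[]" X3]
  unfolding stage_down_def split_at_ab Let_def by auto

lemma stage_down_ab_split:
  "\<not> (X3 \<noteq> [] \<and> b < hd X3) \<Longrightarrow> X2 = [] \<Longrightarrow> X3 = V @ G \<Longrightarrow> \<forall>x\<in>set G. b < x \<Longrightarrow>
   (V = [] \<or> \<not> b < last V) \<Longrightarrow> \<not> last X1 < a \<Longrightarrow>
   stage_down a b (X1 @ a # X2 @ b # X3) = X1 @ a # V @ b # G"
  using ab notin rev_takeWhile_dropWhile_append[of G "\<lambda>x. b < x" V] split_at_append_Cons[of b "[]" X3]
  unfolding stage_down_def split_at_ab Let_def by auto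

lemma stage_down_ab_swap:
  "\<not> (X3 \<noteq> [] \<and> b < hd X3) \<Longrightarrow> X2 \<noteq> [] \<Longrightarrow> last X1 < a \<Longrightarrow>
   stage_down a b (X1 @ a # X2 @ b # X3) = X1 @ b # X2 @ a # X3"
  using ab notin split_at_append_Cons[of b X2 X3]
  unfolding stage_down_def split_at_ab Let_def by (auto simp: swap_ab)

lemma stage_down_ab_move:
  "\<not> (X3 \<noteq> [] \<and> b < hd X3) \<Longrightarrow> X2 \<noteq> [] \<Longrightarrow> \<not> last X1 < a \<Longrightarrow> X2 = G @ Y \<Longrightarrow>
   \<forall>x\<in>set G. b < x \<Longrightarrow> (Y = [] \<or> \<not> b < hd Y) \<Longrightarrow>
   stage_down a b (X1 @ a # X2 @ b # X3) = X1 @ a # Y @ b # G @ X3"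
  using ab notin split_at_append_Cons[of b X2 X3] takeWhile_dropWhile_append[of G "\<lambda>x. b < x" Y]
  unfolding stage_down_def split_at_ab Let_def by auto

lemma stage_up_ba_fix:
  "X3 \<noteq> [] \<Longrightarrow> a < hd X3 \<Longrightarrow> stage_up a b (X1 @ b # X2 @ a # X3) = X1 @ b # X2 @ a # X3"
  using ab unfolding stage_up_def split_at_ba Let_def by auto

lemma stage_up_ba_swap:
  "X3 \<noteq> [] \<Longrightarrow> \<not> a < hd X3 \<Longrightarrow> last (X1 @ b # X2) < a \<Longrightarrow>
   stage_up a b (X1 @ b # X2 @ a # X3) = X1 @ a # X2 @ b # X3"
  using ab notin unfolding stage_up_def split_at_ba Let_def by (auto simp: split_at_append_Cons swap_ab)

lemma stage_up_ba_from_end: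
  "X3 = [] \<Longrightarrow> last (X1 @ b # X2) < a \<Longrightarrow> X2 = G @ V \<Longrightarrow> \<forall>x\<in>set G. b < x \<Longrightarrow>
   (V = [] \<or> \<not> b < hd V) \<Longrightarrow> stage_up a b (X1 @ b # X2 @ a # X3) = X1 @ a # b # V @ G"
  using ab notin takeWhile_dropWhile_append[of G "\<lambda>x. b < x" V] split_at_append_Cons[of a X2 X3]
  unfolding stage_up_def split_at_ba Let_def by auto

lemma stage_up_ba_move:
  "\<not> (X3 \<noteq> [] \<and> a < hd X3) \<Longrightarrow> \<not> last (X1 @ b # X2) < a \<Longrightarrow> X2 = G @ V \<Longrightarrow> \<forall>x\<in>set G. b < x \<Longrightarrow>
   (V = [] \<or> \<not> b < hd V) \<Longrightarrow> stage_up a b (X1 @ b # X2 @ a # X3) = X1 @ b # V @ a # G @ X3"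
  using ab notin takeWhile_dropWhile_append[of G "\<lambda>x. b < x" V] split_at_append_Cons[of a X2 X3]
  unfolding stage_up_def split_at_ba Let_def by auto

lemma stage_down_ba_fix:
  "b < hd (X2 @ [a]) \<Longrightarrow> stage_down a b (X1 @ b # X2 @ a # X3) = X1 @ b # X2 @ a # X3"
  using ab unfolding stage_down_def split_at_ba Let_def by (cases X2) auto

lemma stage_down_ba_swap:
  "\<not> b < hd (X2 @ [a]) \<Longrightarrow> last (X1 @ b # X2) < a \<Longrightarrow>
   stage_down a b (X1 @ b # X2 @ a # X3) = X1 @ a # X2 @ b # X3"
  using ab swap_ab unfolding stage_down_def split_at_ba Let_def by (cases X2) auto

lemma stage_down_ba_move:
  "\<not> b < hd (X2 @ [a]) \<Longrightarrow> \<not> last (X1 @ b # X2) < a \<Longrightarrow> X3 = G @ R \<Longrightarrow> \<forall>x\<in>set G. b < x \<Longrightarrow>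
   (R = [] \<or> \<not> b < hd R) \<Longrightarrow> stage_down a b (X1 @ b # X2 @ a # X3) = X1 @ b # G @ X2 @ a # R"
  using ab notin takeWhile_dropWhile_append[of G "\<lambda>x. b < x" R] split_at_append_Cons[of a X2 X3]
  unfolding stage_down_def split_at_ba Let_def by (cases X2) auto

end

section \<open>One step from stage k-1 to stage k\<close>

lemma admissible_less: "x < y \<Longrightarrow> admissible k x y"
  by (simp add: admissible_def)

lemma admissible_descentD: "admissible k x y \<Longrightarrow> y < x \<Longrightarrow> odd y \<and> descent_top k x"
  by (auto simp: admissible_def)

lemma stage_memI:
  assumes "mset v = mset w" "w \<in> stage n j" "v \<noteq> []" "hd v = 0" "successively (admissible k) v"
    "odd (last v)" "2*k < last v"
  shows "v \<in> stage n k"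
  using assms mset_eq_imp_distinct_iff[of v w] mset_eq_setD[of v w] unfolding stage_def by auto

locale letter_pair =
  fixes k a b :: nat
  assumes k_pos: "1 \<le> k" and a_eq: "a = 2*k - 1" and b_eq: "b = 2*k"
begin

lemma ab: "a < b" "b = Suc a" "odd a" "even b"
  using k_pos by (auto simp: a_eq b_eq)

lemma descent_top_other: "x \<noteq> a \<Longrightarrow> x \<noteq> b \<Longrightarrow> descent_top (k-1) x = descent_top k x"
  using k_pos unfolding descent_top_def a_eq b_eq by (cases "even x") (auto elim!: evenE oddE)

lemma admissible_other: "x \<noteq> a \<Longrightarrow> x \<noteq> b \<Longrightarrow> admissible (k-1) x y = admissible k x y"
  using descent_top_other by (simp add: admissible_def)

lemma successively_admissible_other:
  assumes "a \<notin> set xs" "b \<notin> set xs"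
  shows "successively (admissible (k-1)) xs = successively (admissible k) xs"
  by (rule successively_cong) (use assms admissible_other in metis)+

lemma descent_top_letters: "descent_top k b" "\<not> descent_top (k-1) b" "descent_top (k-1) a" "\<not> descent_top k a"
  using k_pos unfolding descent_top_def a_eq b_eq by auto

lemma descent_top_above_b: "b < x \<Longrightarrow> descent_top (k-1) x \<Longrightarrow> odd x \<and> descent_top k x"
  using k_pos unfolding descent_top_def a_eq b_eq by auto

lemma admissible_b_less: "admissible (k-1) b y \<Longrightarrow> b < y"
  using descent_top_letters ab by (auto simp: admissible_def)

lemma admissible_less_b: "admissible j x b \<Longrightarrow> x < b"
  using ab by (auto simp: admissible_def)

lemma admissible_a_less: "admissible k a y \<Longrightarrow> a < y"
  using descent_top_letters ab by (auto simp: admissible_def)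

lemma less_b_imp_less_a: "x < b \<Longrightarrow> x \<noteq> a \<Longrightarrow> x < a"
  using ab by auto

lemma greater_a_imp_greater_b: "a < x \<Longrightarrow> x \<noteq> b \<Longrightarrow> b < x"
  using ab by auto

lemma odd_above_stage: "odd x \<Longrightarrow> 2*(k-1) < x \<Longrightarrow> x \<noteq> a \<Longrightarrow> 2*k < x"
  using k_pos a_eq by (cases k) (auto elim!: oddE)

abbreviation up_correct :: "nat \<Rightarrow> nat list \<Rightarrow> bool" where
  "up_correct n w \<equiv> stage_up a b w \<in> stage n k \<and> desc_count (stage_up a b w) = desc_count w
     \<and> stage_down a b (stage_up a b w) = w"

abbreviation down_correct :: "nat \<Rightarrow> nat list \<Rightarrow> bool" where
  "down_correct n v \<equiv> stage_down a b v \<in> stage n (k-1) \<and> stage_up a b (stage_down a b v) = v"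

end

locale up_ab = letter_pair +
  fixes n :: nat and w X1 X2 X3 :: "nat list"
  assumes w_mem: "w \<in> stage n (k-1)" and w_eq: "w = X1 @ a # X2 @ b # X3"
begin

lemma notin: "a \<notin> set X1" "b \<notin> set X1" "a \<notin> set X2" "b \<notin> set X2" "a \<notin> set X3" "b \<notin> set X3"
  using w_mem ab unfolding w_eq stage_def by auto

lemma X1_ne: "X1 \<noteq> []" and hd_X1: "hd X1 = 0"
  using w_mem ab unfolding w_eq stage_def by (cases X1; auto)+

lemma X3_ne: "X3 \<noteq> []"
  using w_mem ab unfolding w_eq stage_def by auto

lemma last_w: "last w = last X3"
  using X3_ne w_eq by simp

lemma last_X3: "odd (last X3)" "2*k < last X3"
proof -
  have "odd (last X3)" "2*(k-1) < last X3" using w_mem last_w by (simp_all add: stage_def)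
  moreover have "last X3 \<noteq> a" using notin(5) X3_ne last_in_set by metis
  ultimately show "odd (last X3)" "2*k < last X3" using odd_above_stage by auto
qed

lemma admissible_w: "successively (admissible (k-1)) (X1 @ a # X2 @ b # X3)"
  using w_mem w_eq by (simp add: stage_def)

lemma admissible_parts:
  "successively (admissible (k-1)) X3" "admissible (k-1) (last X1) a" "admissible (k-1) a (hd (X2 @ [b]))"
  "admissible (k-1) (last (a # X2)) b" "admissible (k-1) b (hd X3)"
  using admissible_w X1_ne X3_ne unfolding successively_append_Cons_Cons_iff by auto

lemma successively_parts:
  "successively (admissible k) X1" "successively (admissible k) X2" "successively (admissible k) X3"
  using admissible_w notin successively_admissible_other unfolding successively_append_Cons_Cons_iff
  by auto

lemma b_less_hd_X3: "b < hd X3"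
  using admissible_parts(5) admissible_b_less by blast

lemma last_a_X2_less_b: "last (a # X2) < b"
  using admissible_parts(4) admissible_less_b by blast

lemma admissible_last_X1: "admissible k (last X1) a"
  using admissible_parts(2) admissible_other notin X1_ne by (metis last_in_set)

lemma fix_case:
  assumes "a < hd (X2 @ [b])"
  shows "up_correct n w"
proof -
  have up: "stage_up a b w = w"
    using stage_up_ab_fix[OF ab(1) notin assms] w_eq by simp
  have "a < hd (X2 @ b # X3)" using assms by (cases X2) auto
  moreover have "X2 \<noteq> [] \<Longrightarrow> last X2 < b" using last_a_X2_less_b by auto
  ultimately have "successively (admissible k) w" unfolding w_eq
    using successively_parts admissible_last_X1 b_less_hd_X3 X1_ne X3_ne ab
    by (auto simp: successively_append_iff successively_Cons intro!: admissible_less)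
  then have "w \<in> stage n k"
    using stage_memI[of w w n "k-1" k] w_mem hd_X1 X1_ne last_X3 last_w w_eq X3_ne by auto
  moreover have "stage_down a b w = w"
    using stage_down_ab_fix[OF ab(1) notin X3_ne b_less_hd_X3] w_eq by simp
  ultimately show ?thesis using up by simp
qed

lemma descent_after_a:
  assumes "\<not> a < hd (X2 @ [b])"
  shows "X2 \<noteq> []" "hd X2 < a" "odd (hd X2)" "last X2 < a"
proof -
  show X2: "X2 \<noteq> []" using assms ab by auto
  then show "hd X2 < a" using assms notin by (cases X2) auto
  then show "odd (hd X2)" using admissible_descentD[OF admissible_parts(3)] X2 by auto
  show "last X2 < a" using last_a_X2_less_b X2 notin less_b_imp_less_a by (metis last_ConsR last_in_set)
qed

lemma swap_case:
  assumes "\<not> a < hd (X2 @ [b])" "last X1 < a"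
  shows "up_correct n w"
proof -
  note X2 = descent_after_a[OF assms(1)]
  let ?v = "X1 @ b # X2 @ a # X3"
  have up: "stage_up a b w = ?v"
    using stage_up_ab_swap[OF ab(1) notin X2(1,2) assms(2)] w_eq by simp
  have "successively (admissible k) ?v"
    using successively_parts assms(2) X2 b_less_hd_X3 X1_ne X3_ne ab descent_top_letters
    by (auto simp: successively_append_iff successively_Cons admissible_def)
  then have "?v \<in> stage n k"
    using stage_memI[of ?v w n "k-1" k] w_mem hd_X1 X1_ne last_X3 last_w w_eq X3_ne by auto
  moreover have "stage_down a b ?v = w"
    using stage_down_ba_swap[OF ab(1) notin] X2 ab w_eq by simp
  moreover have "desc_count ?v = desc_count w" unfolding w_eq
    using assms(2) X2 b_less_hd_X3 X1_ne X3_ne ab by (simp add: desc_count_append desc_count_Cons)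
  ultimately show ?thesis using up by simp
qed

lemma move_case:
  assumes "\<not> a < hd (X2 @ [b])" "\<not> last X1 < a"
    and X3: "X3 = G @ V" "\<forall>x\<in>set G. b < x" "V \<noteq> []" "\<not> b < hd V"
  shows "up_correct n w"
proof -
  note X2 = descent_after_a[OF assms(1)]
  have notin_GV: "a \<notin> set G" "b \<notin> set G" "a \<notin> set V" "b \<notin> set V" using notin X3(1) by auto
  have G_ne: "G \<noteq> []" using X3 b_less_hd_X3 by auto
  have G_b: "b < hd G" "b < last G" using X3(2) G_ne by auto
  have hd_V: "hd V < b" using X3(3,4) notin_GV by (metis hd_in_set linorder_neqE_nat)
  have G_V: "successively (admissible k) G" "successively (admissible k) V"
    using successively_parts(3) X3(1) by (auto simp: successively_append_iff)
  have "admissible (k-1) (last G) (hd V)"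
    using admissible_parts(1) X3 G_ne by (auto simp: successively_append_iff)
  then have "odd (hd V)" "descent_top k (last G)"
    using admissible_descentD hd_V G_b descent_top_above_b by auto
  let ?v = "X1 @ a # G @ X2 @ b # V"
  have up: "stage_up a b w = ?v"
    using stage_up_ab_move[OF ab(1) notin X2(1,2) assms(2) X3] w_eq by simp
  have "successively (admissible k) ?v"
    using successively_parts G_V admissible_last_X1 X2 X1_ne G_ne X3(3) ab descent_top_letters
      \<open>odd (hd V)\<close> \<open>descent_top k (last G)\<close> G_b hd_V last_a_X2_less_b
    by (auto simp: successively_append_iff successively_Cons admissible_def)
  then have "?v \<in> stage n k"
    using stage_memI[of ?v w n "k-1" k] w_mem hd_X1 X1_ne last_X3 w_eq X3 by auto
  moreover have "stage_down a b ?v = w"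
    using stage_down_ab_move[OF ab(1), of X1 "G @ X2" V G X2] notin notin_GV hd_V X2 assms(2) X3 ab w_eq
    by auto
  moreover have "desc_count ?v = desc_count w" unfolding w_eq X3(1)
    using assms(2) X2 hd_V X1_ne G_ne X3(3) ab G_b notin by (simp add: desc_count_append desc_count_Cons)
  ultimately show ?thesis using up by simp
qed

lemma join_case:
  assumes "\<not> a < hd (X2 @ [b])" "\<not> last X1 < a" "\<forall>x\<in>set X3. b < x"
  shows "up_correct n w"
proof -
  note X2 = descent_after_a[OF assms(1)]
  let ?v = "X1 @ a # b # X2 @ X3"
  have up: "stage_up a b w = ?v"
    using stage_up_ab_join[OF ab(1) notin X2(1,2) assms(2,3)] w_eq by simp
  have "successively (admissible k) ?v"
    using successively_parts admissible_last_X1 X2 X1_ne X3_ne ab descent_top_letters b_less_hd_X3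
      last_a_X2_less_b
    by (auto simp: successively_append_iff successively_Cons admissible_def)
  then have "?v \<in> stage n k"
    using stage_memI[of ?v w n "k-1" k] w_mem hd_X1 X1_ne last_X3 last_w w_eq X3_ne by auto
  moreover have "stage_down a b ?v = w"
    using stage_down_ab_split[OF ab(1), of X1 "[]" "X2 @ X3" X2 X3] notin X2 ab assms(2,3) w_eq by auto
  moreover have "desc_count ?v = desc_count w" unfolding w_eq
    using assms(2) X2 b_less_hd_X3 X1_ne X3_ne ab notin by (simp add: desc_count_append desc_count_Cons)
  ultimately show ?thesis using up by simp
qed

lemma correct: "up_correct n w"
proof (cases "a < hd (X2 @ [b])")
  case True
  then show ?thesis by (rule fix_case)
next
  case False
  show ?thesis
  proof (cases "last X1 < a")
    case True
    with False show ?thesis by (rule swap_case)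
  next
    case not_less: False
    define G V where "G = takeWhile (\<lambda>x. b < x) X3" and "V = dropWhile (\<lambda>x. b < x) X3"
    have GV: "X3 = G @ V" "\<forall>x\<in>set G. b < x" "V = [] \<or> \<not> b < hd V"
      using takeWhile_dropWhile_split[where X=X3 and P="\<lambda>x. b < x"] unfolding G_def V_def by auto
    show ?thesis
    proof (cases "V = []")
      case True
      then have "\<forall>x\<in>set X3. b < x" using GV by simp
      then show ?thesis by (rule join_case[OF False not_less])
    next
      case V_ne: False
      then have "\<not> b < hd V" using GV(3) by simp
      then show ?thesis by (rule move_case[OF False not_less GV(1,2) V_ne])
    qed
  qed
qed

end

locale up_ba = letter_pair +
  fixes n :: nat and w X1 X2 X3 :: "nat list"
  assumes w_mem: "w \<in> stage n (k-1)" and w_eq: "w = X1 @ b # X2 @ a # X3"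
begin

lemma notin: "a \<notin> set X1" "b \<notin> set X1" "a \<notin> set X2" "b \<notin> set X2" "a \<notin> set X3" "b \<notin> set X3"
  using w_mem ab unfolding w_eq stage_def by auto

lemma X1_ne: "X1 \<noteq> []" and hd_X1: "hd X1 = 0"
  using w_mem ab unfolding w_eq stage_def by (cases X1; auto)+

lemma last_w: "X3 \<noteq> [] \<Longrightarrow> last w = last X3"
  using w_eq by simp

lemma last_X3: "X3 \<noteq> [] \<Longrightarrow> odd (last X3) \<and> 2*k < last X3"
proof -
  assume X3: "X3 \<noteq> []"
  have "odd (last X3)" "2*(k-1) < last X3" using w_mem last_w[OF X3] by (simp_all add: stage_def)
  moreover have "last X3 \<noteq> a" using notin(5) X3 last_in_set by metis
  ultimately show ?thesis using odd_above_stage by auto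
qed

lemma admissible_w: "successively (admissible (k-1)) (X1 @ b # X2 @ a # X3)"
  using w_mem w_eq by (simp add: stage_def)

lemma admissible_parts:
  "successively (admissible (k-1)) X2" "admissible (k-1) (last X1) b" "admissible (k-1) b (hd (X2 @ [a]))"
  "admissible (k-1) (last (b # X2)) a" "X3 \<noteq> [] \<Longrightarrow> admissible (k-1) a (hd X3)"
  using admissible_w X1_ne unfolding successively_append_Cons_Cons_iff by auto

lemma successively_parts:
  "successively (admissible k) X1" "successively (admissible k) X2" "successively (admissible k) X3"
  using admissible_w notin successively_admissible_other unfolding successively_append_Cons_Cons_iff
  by auto

lemma last_X1_less_a: "last X1 < a"
  using admissible_parts(2) admissible_less_b less_b_imp_less_a notin(1) X1_ne last_in_set by metis

lemma X2_ne: "X2 \<noteq> []" and b_less_hd_X2: "b < hd X2"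
  using admissible_b_less[OF admissible_parts(3)] ab by (cases X2; simp)+

lemma last_X2_notin: "last X2 \<noteq> a" "last X2 \<noteq> b"
  using notin(3,4) X2_ne last_in_set by metis+

lemma admissible_last_X2: "admissible (k-1) (last X2) a"
  using admissible_parts(4) X2_ne by simp

lemma descent_after_a:
  assumes "\<not> (X3 \<noteq> [] \<and> a < hd X3)" "X3 \<noteq> []"
  shows "hd X3 < a" "odd (hd X3)"
proof -
  show "hd X3 < a" using assms notin(5) by (cases X3) auto
  then show "odd (hd X3)" using admissible_descentD[OF admissible_parts(5)] assms(2) by blast
qed

lemma fix_case:
  assumes "X3 \<noteq> []" "a < hd X3"
  shows "up_correct n w"
proof -
  have up: "stage_up a b w = w"
    using stage_up_ba_fix[OF ab(1) notin assms] w_eq by simp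
  have "admissible k (last X2) a" using admissible_last_X2 admissible_other last_X2_notin by blast
  then have "successively (admissible k) w" unfolding w_eq
    using successively_parts last_X1_less_a b_less_hd_X2 assms X1_ne X2_ne ab
    by (auto simp: successively_append_iff successively_Cons intro!: admissible_less)
  then have "w \<in> stage n k"
    using stage_memI[of w w n "k-1" k] w_mem w_eq hd_X1 X1_ne last_X3[OF assms(1)] last_w[OF assms(1)]
    by auto
  moreover have "stage_down a b w = w"
    using stage_down_ba_fix[OF ab(1) notin] b_less_hd_X2 X2_ne w_eq by simp
  ultimately show ?thesis using up by simp
qed

lemma swap_case:
  assumes "\<not> (X3 \<noteq> [] \<and> a < hd X3)" "X3 \<noteq> []" "last X2 < a"
  shows "up_correct n w"
proof -
  note X3 = descent_after_a[OF assms(1,2)]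
  let ?v = "X1 @ a # X2 @ b # X3"
  have up: "stage_up a b w = ?v"
    using stage_up_ba_swap[OF ab(1) notin assms(2)] X3 assms(3) X2_ne w_eq by simp
  have "successively (admissible k) ?v"
    using successively_parts last_X1_less_a b_less_hd_X2 assms(2,3) X1_ne X2_ne X3 ab descent_top_letters
    by (auto simp: successively_append_iff successively_Cons admissible_def)
  then have "?v \<in> stage n k"
    using stage_memI[of ?v w n "k-1" k] w_mem hd_X1 X1_ne last_X3 assms(2) w_eq by auto
  moreover have "stage_down a b ?v = w"
    using stage_down_ab_swap[OF ab(1) notin] X3 assms(2) X2_ne last_X1_less_a ab w_eq by simp
  moreover have "desc_count ?v = desc_count w" unfolding w_eq
    using assms(2,3) last_X1_less_a X3 X1_ne X2_ne b_less_hd_X2 ab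
    by (simp add: desc_count_append desc_count_Cons)
  ultimately show ?thesis using up by simp
qed

context
  fixes G V :: "nat list"
  assumes X2_eq: "X2 = G @ V" and G_greater: "\<forall>x\<in>set G. b < x" and hd_V: "V = [] \<or> \<not> b < hd V"
begin

lemma notin_G_V: "a \<notin> set G" "b \<notin> set G" "a \<notin> set V" "b \<notin> set V"
  using notin X2_eq by auto

lemma G_ne: "G \<noteq> []"
  using b_less_hd_X2 X2_ne X2_eq hd_V by auto

lemma G_b: "b < hd G" "b < last G"
  using G_greater G_ne by auto

lemma hd_V_less_b: "V \<noteq> [] \<Longrightarrow> hd V < b"
  using hd_V notin_G_V(4) by (metis hd_in_set linorder_neqE_nat)

lemma successively_G_V: "successively (admissible k) G" "successively (admissible k) V"
  using successively_parts(2) X2_eq by (auto simp: successively_append_iff)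

lemma descent_G_V: "V \<noteq> [] \<Longrightarrow> odd (hd V) \<and> descent_top k (last G)"
proof -
  assume V: "V \<noteq> []"
  have "admissible (k-1) (last G) (hd V)"
    using admissible_parts(1) X2_eq G_ne V by (auto simp: successively_append_iff)
  then show ?thesis using admissible_descentD hd_V_less_b[OF V] G_b descent_top_above_b by auto
qed

lemma from_end_case:
  assumes "X3 = []" "last X2 < a"
  shows "up_correct n w"
proof -
  have V_ne: "V \<noteq> []"
  proof
    assume "V = []"
    then have "last X2 \<in> set G" using X2_eq G_ne by simp
    then show False using G_greater assms(2) ab by auto
  qed
  have last_V: "last V = last X2" using X2_eq V_ne by simp
  note V = hd_V_less_b[OF V_ne] descent_G_V[OF V_ne]
  have last_G: "odd (last G) \<and> 2*k < last G"
    using V G_b unfolding descent_top_def b_eq by auto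
  let ?v = "X1 @ a # b # V @ G"
  have up: "stage_up a b w = ?v"
    using stage_up_ba_from_end[OF ab(1) notin assms(1) _ X2_eq G_greater hd_V] assms(2) X2_ne w_eq
    by simp
  have "successively (admissible k) ?v"
    using successively_parts successively_G_V last_X1_less_a V V_ne G_ne last_V assms(2) G_b ab
      descent_top_letters
    by (auto simp: successively_append_iff successively_Cons admissible_def)
  moreover have "mset ?v = mset w" using w_eq X2_eq assms(1) by simp
  ultimately have "?v \<in> stage n k"
    using stage_memI[of ?v w n "k-1" k] w_mem hd_X1 X1_ne last_G G_ne by simp
  moreover have "stage_down a b (X1 @ a # [] @ b # V @ G) = X1 @ b # G @ V @ [a]"
    by (rule stage_down_ab_to_end[OF ab(1)])
      (use notin notin_G_V V V_ne G_greater last_V assms(2) ab last_X1_less_a in auto)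
  then have "stage_down a b ?v = w" using w_eq assms(1) X2_eq by simp
  moreover have "desc_count ?v = desc_count w" unfolding w_eq X2_eq assms(1)
    using last_X1_less_a V V_ne G_ne last_V assms(2) ab G_b
    by (simp add: desc_count_append desc_count_Cons)
  ultimately show ?thesis using up by simp
qed

lemma move_case:
  assumes "\<not> (X3 \<noteq> [] \<and> a < hd X3)" "\<not> last X2 < a"
  shows "up_correct n w"
proof -
  note X3 = descent_after_a[OF assms(1)]
  have a_less: "a < last X2" using assms(2) last_X2_notin by auto
  have top_X2: "descent_top k (last X2)"
    using admissible_descentD[OF admissible_last_X2 a_less] descent_top_other last_X2_notin by auto
  have top_G: "descent_top k (last G)" using top_X2 descent_G_V X2_eq by (cases "V = []") auto
  have last_V: "V \<noteq> [] \<Longrightarrow> last V = last X2" using X2_eq by simp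
  let ?v = "X1 @ b # V @ a # G @ X3"
  have up: "stage_up a b w = ?v"
    using stage_up_ba_move[OF ab(1) notin assms(1) _ X2_eq G_greater hd_V] assms(2) X2_ne w_eq by simp
  have "successively (admissible k) ?v"
    using successively_parts successively_G_V last_X1_less_a hd_V_less_b descent_G_V last_V a_less
      top_X2 top_G G_ne G_b X3 ab descent_top_letters
    by (cases "V = []"; cases "X3 = []") (auto simp: successively_append_iff successively_Cons admissible_def)
  moreover have "odd (last ?v) \<and> 2*k < last ?v"
    using last_X3 top_G G_b G_ne unfolding descent_top_def b_eq by (cases "X3 = []") auto
  moreover have "mset ?v = mset w" using w_eq X2_eq by simp
  ultimately have "?v \<in> stage n k"
    using stage_memI[of ?v w n "k-1" k] w_mem hd_X1 X1_ne by simp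
  moreover have "stage_down a b ?v = X1 @ b # G @ V @ a # X3"
  proof -
    have "\<not> b < hd (V @ [a])" using hd_V_less_b ab by (cases "V = []") auto
    moreover have "\<not> last (X1 @ b # V) < a" using last_V a_less ab by (cases "V = []") auto
    moreover have "X3 = [] \<or> \<not> b < hd X3" using X3 ab by auto
    ultimately show ?thesis
      using stage_down_ba_move[OF ab(1), of X1 V "G @ X3" G X3] notin notin_G_V G_greater by auto
  qed
  then have "stage_down a b ?v = w" using w_eq X2_eq by simp
  moreover have "desc_count ?v = desc_count w" unfolding w_eq X2_eq
    using last_X1_less_a hd_V_less_b last_V a_less G_ne ab G_b X3
    by (cases "V = []"; cases "X3 = []") (simp_all add: desc_count_append desc_count_Cons)
  ultimately show ?thesis using up by simp
qed

end

lemma correct: "up_correct n w"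
proof (cases "X3 \<noteq> [] \<and> a < hd X3")
  case True
  then show ?thesis using fix_case by blast
next
  case no_fix: False
  define G V where "G = takeWhile (\<lambda>x. b < x) X2" and "V = dropWhile (\<lambda>x. b < x) X2"
  have GV: "X2 = G @ V" "\<forall>x\<in>set G. b < x" "V = [] \<or> \<not> b < hd V"
    using takeWhile_dropWhile_split[where X=X2 and P="\<lambda>x. b < x"] unfolding G_def V_def by auto
  show ?thesis
  proof (cases "last X2 < a")
    case True
    then show ?thesis using swap_case[OF no_fix] from_end_case[OF GV] by blast
  next
    case False
    then show ?thesis using move_case[OF GV no_fix] by blast
  qed
qed

end

locale down_ab = letter_pair +
  fixes n :: nat and v X1 X2 X3 :: "nat list"
  assumes v_mem: "v \<in> stage n k" and v_eq: "v = X1 @ a # X2 @ b # X3"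
begin

lemma notin: "a \<notin> set X1" "b \<notin> set X1" "a \<notin> set X2" "b \<notin> set X2" "a \<notin> set X3" "b \<notin> set X3"
  using v_mem ab unfolding v_eq stage_def by auto

lemma X1_ne: "X1 \<noteq> []" and hd_X1: "hd X1 = 0"
  using v_mem ab unfolding v_eq stage_def by (cases X1; auto)+

lemma X3_ne: "X3 \<noteq> []"
  using v_mem ab unfolding v_eq stage_def by auto

lemma last_v: "last v = last X3"
  using X3_ne v_eq by simp

lemma last_X3: "odd (last X3)" "2*k < last X3" "2*(k-1) < last X3"
proof -
  show "odd (last X3)" "2*k < last X3" using v_mem last_v by (simp_all add: stage_def)
  then show "2*(k-1) < last X3" by linarith
qed

lemma admissible_v: "successively (admissible k) (X1 @ a # X2 @ b # X3)"
  using v_mem v_eq by (simp add: stage_def)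

lemma admissible_parts:
  "successively (admissible k) X2" "admissible k (last X1) a" "admissible k a (hd (X2 @ [b]))"
  "admissible k (last (a # X2)) b" "admissible k b (hd X3)"
  using admissible_v X1_ne X3_ne unfolding successively_append_Cons_Cons_iff by auto

lemma successively_parts:
  "successively (admissible (k-1)) X1" "successively (admissible (k-1)) X2"
  "successively (admissible (k-1)) X3"
  using admissible_v notin successively_admissible_other unfolding successively_append_Cons_Cons_iff
  by auto

lemma a_less_hd_X2: "a < hd (X2 @ [b])"
  using admissible_parts(3) admissible_a_less by blast

lemma last_a_X2_less_b: "last (a # X2) < b"
  using admissible_parts(4) admissible_less_b by blast

lemma admissible_last_X1: "admissible (k-1) (last X1) a"
  using admissible_parts(2) admissible_other notin X1_ne by (metis last_in_set)

lemma fix_case: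
  assumes "b < hd X3"
  shows "down_correct n v"
proof -
  have down: "stage_down a b v = v"
    using stage_down_ab_fix[OF ab(1) notin X3_ne assms] v_eq by simp
  have "a < hd (X2 @ b # X3)" using a_less_hd_X2 by (cases X2) auto
  moreover have "X2 \<noteq> [] \<Longrightarrow> last X2 < b" using last_a_X2_less_b by auto
  ultimately have "successively (admissible (k-1)) v" unfolding v_eq
    using successively_parts admissible_last_X1 assms X1_ne X3_ne ab
    by (auto simp: successively_append_iff successively_Cons intro!: admissible_less)
  then have "v \<in> stage n (k-1)"
    using stage_memI[of v v n k "k-1"] v_mem hd_X1 X1_ne last_X3(1,3) last_v v_eq by auto
  moreover have "stage_up a b v = v"
    using stage_up_ab_fix[OF ab(1) notin a_less_hd_X2] v_eq by simp
  ultimately show ?thesis using down by simp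
qed

lemma descent_after_b:
  assumes "\<not> b < hd X3"
  shows "hd X3 < a" "odd (hd X3)"
proof -
  show "hd X3 < a" using assms notin(5,6) X3_ne less_b_imp_less_a by (metis hd_in_set linorder_neqE_nat)
  then show "odd (hd X3)" using admissible_descentD[OF admissible_parts(5)] ab by auto
qed

context
  fixes V G :: "nat list"
  assumes X2_empty: "X2 = []" and not_fix: "\<not> b < hd X3"
    and X3_eq: "X3 = V @ G" and G_greater: "\<forall>x\<in>set G. b < x" and last_V: "V = [] \<or> \<not> b < last V"
begin

lemma notin_V_G: "a \<notin> set G" "b \<notin> set G" "a \<notin> set V" "b \<notin> set V"
  using notin X3_eq by auto

lemma G_ne: "G \<noteq> []"
proof
  assume "G = []"
  then have "V \<noteq> []" "last V = last X3" using X3_eq X3_ne by auto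
  then show False using last_V last_X3(2) b_eq by auto
qed

lemma V_ne: "V \<noteq> []"
  using not_fix X3_eq G_greater X3_ne by (cases V) auto

lemma hd_V: "hd V = hd X3" and last_G: "last G = last X3"
  using X3_eq V_ne G_ne by simp_all

lemma last_V_less_a: "last V < a"
  using last_V V_ne notin_V_G less_b_imp_less_a by (metis last_in_set linorder_neqE_nat)

lemma G_b: "b < hd G" "b < last G"
  using G_greater G_ne by auto

lemma successively_V_G: "successively (admissible (k-1)) G" "successively (admissible (k-1)) V"
  using successively_parts(3) X3_eq by (auto simp: successively_append_iff)

lemma descent_top_last_G: "descent_top (k-1) (last G)"
  using last_X3(1,3) last_G unfolding descent_top_def by auto

lemma to_end_case:
  assumes "last X1 < a"
  shows "down_correct n v"
proof -
  note X3 = descent_after_b[OF not_fix]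
  let ?u = "X1 @ b # G @ V @ [a]"
  have down: "stage_down a b v = ?u"
    using stage_down_ab_to_end[OF ab(1) notin _ X2_empty X3_eq G_greater last_V assms] not_fix X3_ne v_eq
    by simp
  have "successively (admissible (k-1)) ?u"
    using successively_parts successively_V_G assms G_b G_ne V_ne hd_V X3 descent_top_last_G
      last_V_less_a ab X1_ne
    by (auto simp: successively_append_iff successively_Cons admissible_def)
  moreover have "mset ?u = mset v" using v_eq X2_empty X3_eq by simp
  moreover have "odd a" "2*(k-1) < a" using ab a_eq k_pos by auto
  ultimately have "?u \<in> stage n (k-1)"
    using stage_memI[of ?u v n k "k-1"] v_mem hd_X1 X1_ne by simp
  moreover have "stage_up a b (X1 @ b # (G @ V) @ a # []) = X1 @ a # b # V @ G"
    by (rule stage_up_ba_from_end[OF ab(1)])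
      (use notin notin_V_G assms last_V_less_a G_greater hd_V X3 V_ne ab in auto)
  ultimately show ?thesis using down v_eq X2_empty X3_eq by simp
qed

lemma split_case:
  assumes "\<not> last X1 < a"
  shows "down_correct n v"
proof -
  note X3 = descent_after_b[OF not_fix]
  let ?u = "X1 @ a # V @ b # G"
  have down: "stage_down a b v = ?u"
    using stage_down_ab_split[OF ab(1) notin _ X2_empty X3_eq G_greater last_V assms] not_fix X3_ne v_eq
    by simp
  have "successively (admissible (k-1)) ?u"
    using successively_parts successively_V_G admissible_last_X1 G_b G_ne V_ne hd_V X3
      last_V_less_a ab X1_ne descent_top_letters
    by (auto simp: successively_append_iff successively_Cons admissible_def)
  moreover have "mset ?u = mset v" using v_eq X2_empty X3_eq by simp
  ultimately have "?u \<in> stage n (k-1)"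
    using stage_memI[of ?u v n k "k-1"] v_mem hd_X1 X1_ne last_G last_X3(1,3) G_ne by simp
  moreover have "stage_up a b (X1 @ a # V @ b # G) = X1 @ a # b # V @ G"
    by (rule stage_up_ab_join[OF ab(1)])
      (use notin notin_V_G assms G_greater hd_V X3 V_ne ab in auto)
  ultimately show ?thesis using down v_eq X2_empty X3_eq by simp
qed

end

lemma swap_case:
  assumes "\<not> b < hd X3" "X2 \<noteq> []" "last X1 < a"
  shows "down_correct n v"
proof -
  note X3 = descent_after_b[OF assms(1)]
  have hd_X2: "b < hd X2" using a_less_hd_X2 assms(2) notin greater_a_imp_greater_b
    by (metis hd_append2 hd_in_set)
  have last_X2: "last X2 < a" using last_a_X2_less_b assms(2) notin less_b_imp_less_a
    by (metis last_ConsR last_in_set)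
  let ?u = "X1 @ b # X2 @ a # X3"
  have down: "stage_down a b v = ?u"
    using stage_down_ab_swap[OF ab(1) notin _ assms(2,3)] assms(1) X3_ne v_eq by simp
  have "successively (admissible (k-1)) ?u"
    using successively_parts assms(2,3) hd_X2 last_X2 X3 X3_ne ab X1_ne descent_top_letters
    by (auto simp: successively_append_iff successively_Cons admissible_def)
  moreover have "mset ?u = mset v" using v_eq by simp
  ultimately have "?u \<in> stage n (k-1)"
    using stage_memI[of ?u v n k "k-1"] v_mem hd_X1 X1_ne last_X3(1,3) last_v v_eq X3_ne by simp
  moreover have "stage_up a b ?u = v"
    using stage_up_ba_swap[OF ab(1) notin X3_ne] assms(3) assms(2) X3 last_X2 v_eq by simp
  ultimately show ?thesis using down by simp
qed

context
  fixes G Y :: "nat list"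
  assumes X2_ne: "X2 \<noteq> []" and X2_eq: "X2 = G @ Y" and G_greater: "\<forall>x\<in>set G. b < x"
    and hd_Y: "Y = [] \<or> \<not> b < hd Y"
begin

lemma notin_G_Y: "a \<notin> set G" "b \<notin> set G" "a \<notin> set Y" "b \<notin> set Y"
  using notin X2_eq by auto

lemma last_X2_less_a: "last X2 < a"
  using last_a_X2_less_b X2_ne notin less_b_imp_less_a by (metis last_ConsR last_in_set)

lemma G_Y_ne: "G \<noteq> []" "Y \<noteq> []"
proof
  assume "G = []"
  then have "Y \<noteq> []" "a < hd Y" using a_less_hd_X2 X2_ne X2_eq by auto
  moreover from this have "hd Y \<noteq> b" using notin_G_Y(4) hd_in_set by metis
  ultimately show False using hd_Y greater_a_imp_greater_b by auto
next
  show "Y \<noteq> []"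
  proof
    assume "Y = []"
    then have "last X2 \<in> set G" using X2_eq X2_ne by simp
    then show False using G_greater last_X2_less_a ab by auto
  qed
qed

lemma hd_Y_less_a: "hd Y < a"
  using hd_Y G_Y_ne(2) notin_G_Y less_b_imp_less_a by (metis hd_in_set linorder_neqE_nat)

lemma descent_G_Y: "odd (hd Y)" "descent_top (k-1) (last G)"
proof -
  have "b < last G" using G_greater G_Y_ne by auto
  moreover have "admissible k (last G) (hd Y)" using admissible_parts(1) X2_eq G_Y_ne
    by (auto simp: successively_append_iff)
  ultimately show "odd (hd Y)" "descent_top (k-1) (last G)"
    using admissible_descentD hd_Y_less_a ab descent_top_other by auto
qed

lemma move_case:
  assumes "\<not> b < hd X3" "\<not> last X1 < a"
  shows "down_correct n v"
proof -
  note X3 = descent_after_b[OF assms(1)]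
  let ?u = "X1 @ a # Y @ b # G @ X3"
  have "last Y = last X2" "b < hd G" using X2_eq G_Y_ne G_greater by auto
  moreover have "successively (admissible (k-1)) G" "successively (admissible (k-1)) Y"
    using successively_parts(2) X2_eq by (auto simp: successively_append_iff)
  ultimately have "successively (admissible (k-1)) ?u"
    using successively_parts admissible_last_X1 G_Y_ne X3_ne hd_Y_less_a last_X2_less_a X3
      descent_G_Y descent_top_letters ab X1_ne
    by (auto simp: successively_append_iff successively_Cons admissible_def)
  moreover have "mset ?u = mset v" using v_eq X2_eq by simp
  ultimately have "?u \<in> stage n (k-1)"
    using stage_memI[of _ v n k "k-1"] v_mem hd_X1 X1_ne last_X3(1,3) last_v X3_ne by simp
  moreover have "stage_down a b v = ?u"
    using stage_down_ab_move[OF ab(1) notin _ X2_ne assms(2) X2_eq G_greater hd_Y] assms(1) X3_ne v_eq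
    by simp
  moreover have "stage_up a b ?u = X1 @ a # G @ Y @ b # X3"
    by (rule stage_up_ab_move[OF ab(1)])
      (use notin notin_G_Y assms(2) G_greater hd_Y_less_a G_Y_ne X3_ne X3 ab in auto)
  ultimately show ?thesis using v_eq X2_eq by simp
qed

end

lemma correct: "down_correct n v"
proof (cases "b < hd X3")
  case True
  then show ?thesis by (rule fix_case)
next
  case not_fix: False
  show ?thesis
  proof (cases "X2 = []")
    case True
    define V G where "V = rev (dropWhile (\<lambda>x. b < x) (rev X3))" and "G = rev (takeWhile (\<lambda>x. b < x) (rev X3))"
    have VG: "X3 = V @ G" "\<forall>x\<in>set G. b < x" "V = [] \<or> \<not> b < last V"
      using rev_takeWhile_dropWhile_split[where X=X3 and P="\<lambda>x. b < x"] unfolding V_def G_def by auto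
    show ?thesis using to_end_case[OF True not_fix VG] split_case[OF True not_fix VG] by blast
  next
    case X2_ne: False
    define G Y where "G = takeWhile (\<lambda>x. b < x) X2" and "Y = dropWhile (\<lambda>x. b < x) X2"
    have GY: "X2 = G @ Y" "\<forall>x\<in>set G. b < x" "Y = [] \<or> \<not> b < hd Y"
      using takeWhile_dropWhile_split[where X=X2 and P="\<lambda>x. b < x"] unfolding G_def Y_def by auto
    show ?thesis using swap_case[OF not_fix X2_ne] move_case[OF X2_ne GY not_fix] by blast
  qed
qed

end

locale down_ba = letter_pair +
  fixes n :: nat and v X1 X2 X3 :: "nat list"
  assumes v_mem: "v \<in> stage n k" and v_eq: "v = X1 @ b # X2 @ a # X3"
begin

lemma notin: "a \<notin> set X1" "b \<notin> set X1" "a \<notin> set X2" "b \<notin> set X2" "a \<notin> set X3" "b \<notin> set X3"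
  using v_mem ab unfolding v_eq stage_def by auto

lemma X1_ne: "X1 \<noteq> []" and hd_X1: "hd X1 = 0"
  using v_mem ab unfolding v_eq stage_def by (cases X1; auto)+

lemma X3_ne: "X3 \<noteq> []"
  using v_mem ab a_eq unfolding v_eq stage_def by auto

lemma last_v: "last v = last X3"
  using X3_ne v_eq by simp

lemma last_X3: "odd (last X3)" "2*k < last X3" "2*(k-1) < last X3"
proof -
  show "odd (last X3)" "2*k < last X3" using v_mem last_v by (simp_all add: stage_def)
  then show "2*(k-1) < last X3" by linarith
qed

lemma admissible_v: "successively (admissible k) (X1 @ b # X2 @ a # X3)"
  using v_mem v_eq by (simp add: stage_def)

lemma admissible_parts:
  "successively (admissible k) X3" "admissible k (last X1) b" "admissible k b (hd (X2 @ [a]))"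
  "admissible k (last (b # X2)) a" "admissible k a (hd X3)"
  using admissible_v X1_ne X3_ne unfolding successively_append_Cons_Cons_iff by auto

lemma successively_parts:
  "successively (admissible (k-1)) X1" "successively (admissible (k-1)) X2"
  "successively (admissible (k-1)) X3"
  using admissible_v notin successively_admissible_other unfolding successively_append_Cons_Cons_iff
  by auto

lemma last_X1_less_a: "last X1 < a"
  using admissible_parts(2) admissible_less_b less_b_imp_less_a notin(1) X1_ne last_in_set by metis

lemma b_less_hd_X3: "b < hd X3"
  using admissible_a_less[OF admissible_parts(5)] greater_a_imp_greater_b notin(6) X3_ne hd_in_set
  by metis

lemma admissible_last_X2: "X2 \<noteq> [] \<Longrightarrow> admissible (k-1) (last X2) a"
  using admissible_parts(4) admissible_other notin(3,4) last_in_set by (metis last_ConsR)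

lemma fix_case:
  assumes "b < hd (X2 @ [a])"
  shows "down_correct n v"
proof -
  have down: "stage_down a b v = v"
    using stage_down_ba_fix[OF ab(1) notin assms] v_eq by simp
  have X2_ne: "X2 \<noteq> []" using assms ab by auto
  then have "successively (admissible (k-1)) v" unfolding v_eq
    using successively_parts admissible_last_X2 assms last_X1_less_a b_less_hd_X3 X1_ne X3_ne ab
    by (auto simp: successively_append_iff successively_Cons intro!: admissible_less)
  then have "v \<in> stage n (k-1)"
    using stage_memI[of v v n k "k-1"] v_mem hd_X1 X1_ne last_X3(1,3) last_v v_eq by auto
  moreover have "stage_up a b v = v"
    using stage_up_ba_fix[OF ab(1) notin X3_ne] b_less_hd_X3 ab v_eq by simp
  ultimately show ?thesis using down by simp
qed

lemma descent_after_b: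
  assumes "\<not> b < hd (X2 @ [a])" "X2 \<noteq> []"
  shows "hd X2 < a" "odd (hd X2)"
proof -
  show "hd X2 < a" using assms notin(3,4) less_b_imp_less_a by (metis hd_append2 hd_in_set linorder_neqE_nat)
  then show "odd (hd X2)" using admissible_descentD[OF admissible_parts(3)] assms(2) ab by auto
qed

lemma swap_case:
  assumes "\<not> b < hd (X2 @ [a])" "last (X1 @ b # X2) < a"
  shows "down_correct n v"
proof -
  have X2_ne: "X2 \<noteq> []" using assms(2) ab by (cases X2) auto
  note X2 = descent_after_b[OF assms(1) X2_ne]
  have last_X2: "last X2 < a" using assms(2) X2_ne by simp
  let ?u = "X1 @ a # X2 @ b # X3"
  have down: "stage_down a b v = ?u"
    using stage_down_ba_swap[OF ab(1) notin assms] v_eq by simp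
  have "successively (admissible (k-1)) ?u"
    using successively_parts last_X1_less_a X2 X2_ne X3_ne last_X2 b_less_hd_X3 ab X1_ne descent_top_letters
    by (auto simp: successively_append_iff successively_Cons admissible_def)
  moreover have "mset ?u = mset v" using v_eq by simp
  ultimately have "?u \<in> stage n (k-1)"
    using stage_memI[of ?u v n k "k-1"] v_mem hd_X1 X1_ne last_X3(1,3) last_v v_eq X3_ne by simp
  moreover have "stage_up a b ?u = v"
    using stage_up_ab_swap[OF ab(1) notin X2_ne X2(1) last_X1_less_a] v_eq by simp
  ultimately show ?thesis using down by simp
qed

context
  fixes G R :: "nat list"
  assumes X3_eq: "X3 = G @ R" and G_greater: "\<forall>x\<in>set G. b < x" and hd_R: "R = [] \<or> \<not> b < hd R"
begin

lemma notin_G_R: "a \<notin> set G" "b \<notin> set G" "a \<notin> set R" "b \<notin> set R"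
  using notin X3_eq by auto

lemma G_ne: "G \<noteq> []"
  using b_less_hd_X3 X3_ne X3_eq hd_R by auto

lemma G_b: "b < hd G" "b < last G"
  using G_greater G_ne by auto

lemma hd_R_less_a: "R \<noteq> [] \<Longrightarrow> hd R < a"
  using hd_R notin_G_R less_b_imp_less_a by (metis hd_in_set linorder_neqE_nat)

lemma successively_G_R: "successively (admissible (k-1)) G" "successively (admissible (k-1)) R"
  using successively_parts(3) X3_eq by (auto simp: successively_append_iff)

lemma odd_hd_R: "R \<noteq> [] \<Longrightarrow> odd (hd R)"
proof -
  assume R: "R \<noteq> []"
  have "admissible k (last G) (hd R)" using admissible_parts(1) X3_eq G_ne R
    by (auto simp: successively_append_iff)
  then show ?thesis using admissible_descentD hd_R_less_a[OF R] G_b ab by (meson less_trans)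
qed

lemma descent_top_last_G: "descent_top (k-1) (last G)"
proof (cases "R = []")
  case True
  then have "last G = last X3" using X3_eq by simp
  then show ?thesis using last_X3(1,3) unfolding descent_top_def by auto
next
  case R: False
  have "admissible k (last G) (hd R)" using admissible_parts(1) X3_eq G_ne R
    by (auto simp: successively_append_iff)
  then have "descent_top k (last G)" using admissible_descentD hd_R_less_a[OF R] G_b ab by auto
  then show ?thesis using descent_top_other G_b ab by auto
qed

lemma move_case:
  assumes "\<not> b < hd (X2 @ [a])" "\<not> last (X1 @ b # X2) < a"
  shows "down_correct n v"
proof -
  note X2 = descent_after_b[OF assms(1)]
  let ?u = "X1 @ b # G @ X2 @ a # R"
  have down: "stage_down a b v = ?u"
    using stage_down_ba_move[OF ab(1) notin assms X3_eq G_greater hd_R] v_eq by simp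
  have "successively (admissible (k-1)) ?u"
    using successively_parts successively_G_R last_X1_less_a G_b G_ne X2 descent_top_last_G
      admissible_last_X2 hd_R_less_a odd_hd_R descent_top_letters ab X1_ne
    by (cases "X2 = []"; cases "R = []") (auto simp: successively_append_iff successively_Cons admissible_def)
  moreover have "mset ?u = mset v" using v_eq X3_eq by simp
  moreover have "odd (last ?u) \<and> 2*(k-1) < last ?u"
    using last_X3(1,3) X3_eq ab a_eq k_pos by (cases "R = []") auto
  ultimately have "?u \<in> stage n (k-1)"
    using stage_memI[of ?u v n k "k-1"] v_mem hd_X1 X1_ne by simp
  moreover have "stage_up a b (X1 @ b # (G @ X2) @ a # R) = X1 @ b # X2 @ a # G @ R"
  proof -
    have "\<not> (R \<noteq> [] \<and> a < hd R)" using hd_R_less_a by auto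
    moreover have "\<not> last (X1 @ b # G @ X2) < a" using assms(2) G_b G_ne ab by (cases "X2 = []") auto
    moreover have "X2 = [] \<or> \<not> b < hd X2" using X2 ab by auto
    ultimately show ?thesis
      using stage_up_ba_move[OF ab(1), of X1 "G @ X2" R G X2] notin notin_G_R G_greater by auto
  qed
  ultimately show ?thesis using down v_eq X3_eq by simp
qed

end

lemma correct: "down_correct n v"
proof (cases "b < hd (X2 @ [a])")
  case True
  then show ?thesis by (rule fix_case)
next
  case not_fix: False
  define G R where "G = takeWhile (\<lambda>x. b < x) X3" and "R = dropWhile (\<lambda>x. b < x) X3"
  have GR: "X3 = G @ R" "\<forall>x\<in>set G. b < x" "R = [] \<or> \<not> b < hd R"
    using takeWhile_dropWhile_split[where X=X3 and P="\<lambda>x. b < x"] unfolding G_def R_def by auto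
  show ?thesis using swap_case[OF not_fix] move_case[OF GR not_fix] by blast
qed

end

context letter_pair
begin

lemma letters_in_stage: "k \<le> n \<Longrightarrow> w \<in> stage n j \<Longrightarrow> a \<in> set w \<and> b \<in> set w"
  using k_pos unfolding stage_def a_eq b_eq by auto

lemma stage_up_correct:
  assumes "k \<le> n" and w: "w \<in> stage n (k-1)"
  shows "up_correct n w"
proof -
  have "a \<in> set w" "b \<in> set w" "a \<noteq> b" using letters_in_stage[OF assms] ab by auto
  then show ?thesis
  proof (cases rule: split_list_two)
    case (1 X1 X2 X3)
    interpret up_ab k a b n w X1 X2 X3
      by unfold_locales (use k_pos a_eq b_eq w 1 in auto)
    show ?thesis by (rule correct)
  next
    case (2 X1 X2 X3)
    interpret up_ba k a b n w X1 X2 X3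
      by unfold_locales (use k_pos a_eq b_eq w 2 in auto)
    show ?thesis by (rule correct)
  qed
qed

lemma stage_down_correct:
  assumes "k \<le> n" and v: "v \<in> stage n k"
  shows "down_correct n v"
proof -
  have "a \<in> set v" "b \<in> set v" "a \<noteq> b" using letters_in_stage[OF assms] ab by auto
  then show ?thesis
  proof (cases rule: split_list_two)
    case (1 X1 X2 X3)
    interpret down_ab k a b n v X1 X2 X3
      by unfold_locales (use k_pos a_eq b_eq v 1 in auto)
    show ?thesis by (rule correct)
  next
    case (2 X1 X2 X3)
    interpret down_ba k a b n v X1 X2 X3
      by unfold_locales (use k_pos a_eq b_eq v 2 in auto)
    show ?thesis by (rule correct)
  qed
qed

lemma bij_betw_stage_up:
  "k \<le> n \<Longrightarrow> bij_betw (stage_up a b) (stage n (k-1)) (stage n k)"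
  by (rule bij_betw_byWitness[where f'="stage_down a b"])
    (use stage_up_correct stage_down_correct in auto)

end

section \<open>From stage 0 to stage n\<close>

fun stage_up_iter :: "nat \<Rightarrow> nat list \<Rightarrow> nat list" where
  "stage_up_iter 0 = id"
| "stage_up_iter (Suc k) = stage_up (2 * Suc k - 1) (2 * Suc k) \<circ> stage_up_iter k"

lemma stage_up_iter_correct:
  "k \<le> n \<Longrightarrow> bij_betw (stage_up_iter k) (stage n 0) (stage n k)
     \<and> (\<forall>w\<in>stage n 0. desc_count (stage_up_iter k w) = desc_count w)"
proof (induction k)
  case 0
  then show ?case by (simp add: bij_betw_def)
next
  case (Suc k)
  interpret letter_pair "Suc k" "2 * Suc k - 1" "2 * Suc k" by unfold_locales auto
  have IH: "bij_betw (stage_up_iter k) (stage n 0) (stage n k)"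
    "\<forall>w\<in>stage n 0. desc_count (stage_up_iter k w) = desc_count w"
    using Suc by auto
  have "bij_betw (stage_up_iter (Suc k)) (stage n 0) (stage n (Suc k))"
    using bij_betw_trans[OF IH(1)] bij_betw_stage_up[OF Suc.prems] by simp
  moreover have "desc_count (stage_up_iter (Suc k) w) = desc_count w" if "w \<in> stage n 0" for w
    using IH stage_up_correct[OF Suc.prems] bij_betwE[OF IH(1)] that by auto
  ultimately show ?case by blast
qed

lemma successively_admissible_iff:
  assumes "distinct xs"
  shows "successively (admissible k) xs \<longleftrightarrow> (\<forall>i\<in>descents xs. descent_top k (xs ! i) \<and> odd (xs ! Suc i))"
proof -
  have "admissible k (xs ! i) (xs ! Suc i) \<longleftrightarrow>
          (xs ! Suc i < xs ! i \<longrightarrow> descent_top k (xs ! i) \<and> odd (xs ! Suc i))"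
    if "Suc i < length xs" for i
    using assms that nth_eq_iff_index_eq[of xs i "Suc i"] unfolding admissible_def by auto
  then show ?thesis unfolding successively_conv_nth descents_def by auto
qed

lemma Cons_zero_in_stage_zero:
  assumes "\<sigma> \<in> Wstar_set n"
  shows "0 # \<sigma> \<in> stage n 0"
proof -
  have d: "distinct \<sigma>" and set_\<sigma>: "set \<sigma> = {1..2*n+1}" and last_\<sigma>: "odd (last \<sigma>)"
    and D: "\<forall>i\<in>descents \<sigma>. odd (\<sigma> ! i) \<and> odd (\<sigma> ! Suc i)"
    using assms unfolding Wstar_set_def perms_def by auto
  have ne: "\<sigma> \<noteq> []" using set_\<sigma> by auto
  have "successively (admissible 0) \<sigma>"
    using D unfolding successively_admissible_iff[OF d] descent_top_def by (auto simp: odd_pos)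
  moreover have "0 < hd \<sigma>" using set_\<sigma> hd_in_set[OF ne] by auto
  ultimately have "successively (admissible 0) (0 # \<sigma>)"
    using ne by (simp add: successively_Cons admissible_less)
  moreover have "distinct (0 # \<sigma>)" "set (0 # \<sigma>) = {0..2*n+1}" using d set_\<sigma> by auto
  moreover have "0 < last \<sigma>" using last_\<sigma> odd_pos by blast
  ultimately show ?thesis using ne last_\<sigma> unfolding stage_def by simp
qed

lemma tl_stage_zero_in_Wstar:
  assumes "v \<in> stage n 0"
  shows "tl v \<in> Wstar_set n \<and> 0 # tl v = v"
proof -
  obtain r where v: "v = 0 # r" using assms unfolding stage_def by (cases v) auto
  have "distinct (0 # r)" "set (0 # r) = {0..2*n+1}" "successively (admissible 0) (0 # r)"
    "odd (last (0 # r))"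
    using assms unfolding v stage_def by simp_all
  then have d: "distinct r" and zero: "0 \<notin> set r" and set_v: "insert 0 (set r) = {0..2*n+1}"
    and S: "successively (admissible 0) r" and last_v: "odd (last (0 # r))"
    by (simp_all add: successively_Cons split: if_splits)
  have "set r = insert 0 (set r) - {0}" using zero by simp
  also have "\<dots> = {1..2*n+1}" unfolding set_v by auto
  finally have set_r: "set r = {1..2*n+1}" .
  then have "r \<noteq> []" by auto
  then have "odd (last r)" using last_v by simp
  moreover have "\<forall>i\<in>descents r. odd (r ! i) \<and> odd (r ! Suc i)"
  proof
    fix i assume i: "i \<in> descents r"
    then have "r ! i \<in> set r" unfolding descents_def by auto
    then have "0 < r ! i" using zero by (intro gr0I) auto
    then show "odd (r ! i) \<and> odd (r ! Suc i)"
      using i S unfolding successively_admissible_iff[OF d] descent_top_def by auto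
  qed
  ultimately have "r \<in> Wstar_set n" using d set_r unfolding Wstar_set_def perms_def by simp
  then show ?thesis using v by simp
qed

lemma bij_betw_Wstar_stage_zero: "bij_betw (Cons 0) (Wstar_set n) (stage n 0)"
  by (rule bij_betw_byWitness[where f'=tl]) (use Cons_zero_in_stage_zero tl_stage_zero_in_Wstar in auto)

lemma framed_X_in_stage:
  assumes "\<tau> \<in> X_set n"
  shows "0 # \<tau> @ [2*n+1] \<in> stage n n"
proof -
  have d: "distinct \<tau>" and set_\<tau>: "set \<tau> = {1..2*n}"
    and D: "\<forall>i\<in>descents \<tau>. even (\<tau> ! i) \<and> odd (\<tau> ! Suc i)"
    using assms unfolding X_set_def perms_def by auto
  have "\<tau> ! i \<le> 2*n" if "i \<in> descents \<tau>" for i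
    using that set_\<tau> nth_mem[of i \<tau>] unfolding descents_def by auto
  then have "successively (admissible n) \<tau>"
    using D unfolding successively_admissible_iff[OF d] descent_top_def by auto
  moreover have "\<tau> \<noteq> [] \<Longrightarrow> 0 < hd \<tau> \<and> last \<tau> < 2*n+1"
    using set_\<tau> hd_in_set[of \<tau>] last_in_set[of \<tau>] by fastforce
  ultimately have "successively (admissible n) (0 # \<tau> @ [2*n+1])"
    by (cases "\<tau> = []") (auto simp: successively_Cons successively_append_iff admissible_less)
  moreover have "distinct (0 # \<tau> @ [2*n+1])" "set (0 # \<tau> @ [2*n+1]) = {0..2*n+1}"
    using d set_\<tau> by auto
  ultimately show ?thesis unfolding stage_def by simp
qed

lemma unframed_stage_in_X:
  assumes "v \<in> stage n n"
  shows "butlast (tl v) \<in> X_set n \<and> 0 # butlast (tl v) @ [2*n+1] = v"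
proof -
  obtain r where v: "v = 0 # r" using assms unfolding stage_def by (cases v) auto
  have "last v \<in> {0..2*n+1}" "2*n < last v" using assms unfolding stage_def by auto
  then have "last v = 2*n+1" by auto
  moreover have "r \<noteq> []" using calculation v by auto
  ultimately have v_eq: "v = 0 # butlast r @ [2*n+1]" using v by (metis append_butlast_last_id last_ConsR)
  define \<tau> where "\<tau> = butlast r"
  have d: "distinct \<tau>" and S: "successively (admissible n) \<tau>"
    and set_v: "insert 0 (insert (2*n+1) (set \<tau>)) = {0..2*n+1}" "0 \<notin> set \<tau>" "2*n+1 \<notin> set \<tau>"
    using assms unfolding v_eq \<tau>_def[symmetric] stage_def
    by (auto simp: successively_Cons successively_append_iff)
  have "set \<tau> = insert 0 (insert (2*n+1) (set \<tau>)) - {0, 2*n+1}" using set_v(2,3) by auto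
  also have "\<dots> = {1..2*n}" unfolding set_v(1) by auto
  finally have set_\<tau>: "set \<tau> = {1..2*n}" .
  have "\<forall>i\<in>descents \<tau>. even (\<tau> ! i) \<and> odd (\<tau> ! Suc i)"
  proof
    fix i assume i: "i \<in> descents \<tau>"
    then have "\<tau> ! i \<le> 2*n" using set_\<tau> nth_mem[of i \<tau>] unfolding descents_def by auto
    then show "even (\<tau> ! i) \<and> odd (\<tau> ! Suc i)"
      using i S unfolding successively_admissible_iff[OF d] descent_top_def by auto
  qed
  then show ?thesis using d set_\<tau> v_eq v unfolding \<tau>_def X_set_def perms_def by simp
qed

lemma bij_betw_stage_X: "bij_betw (\<lambda>v. butlast (tl v)) (stage n n) (X_set n)"
  by (rule bij_betw_byWitness[where f'="\<lambda>\<tau>. 0 # \<tau> @ [2*n+1]"])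
    (use framed_X_in_stage unframed_stage_in_X in auto)

lemma desc_count_frame:
  assumes "\<forall>x\<in>set \<tau>. 0 < x \<and> x < m"
  shows "desc_count (0 # \<tau> @ [m]) = desc_count \<tau>"
proof (cases "\<tau> = []")
  case False
  then have "0 < hd \<tau>" "last \<tau> < m" using assms by auto
  with False show ?thesis by (simp add: desc_count_Cons desc_count_append)
qed simp

definition Wstar_to_X :: "nat \<Rightarrow> nat list \<Rightarrow> nat list" where
  "Wstar_to_X n \<sigma> = butlast (tl (stage_up_iter n (0 # \<sigma>)))"

lemma Wstar_to_X_correct:
  "bij_betw (Wstar_to_X n) (Wstar_set n) (X_set n) \<and> (\<forall>\<sigma>\<in>Wstar_set n. des (Wstar_to_X n \<sigma>) = des \<sigma>)"
proof
  have up: "bij_betw (stage_up_iter n) (stage n 0) (stage n n)"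
    "\<forall>w\<in>stage n 0. desc_count (stage_up_iter n w) = desc_count w"
    using stage_up_iter_correct[of n n] by auto
  have "Wstar_to_X n = (\<lambda>v. butlast (tl v)) \<circ> stage_up_iter n \<circ> Cons 0"
    unfolding Wstar_to_X_def by auto
  then show "bij_betw (Wstar_to_X n) (Wstar_set n) (X_set n)"
    using bij_betw_trans[OF bij_betw_trans[OF bij_betw_Wstar_stage_zero up(1)] bij_betw_stage_X]
    by (simp add: comp_assoc)
  show "\<forall>\<sigma>\<in>Wstar_set n. des (Wstar_to_X n \<sigma>) = des \<sigma>"
  proof
    fix \<sigma> assume \<sigma>: "\<sigma> \<in> Wstar_set n"
    then have "stage_up_iter n (0 # \<sigma>) \<in> stage n n"
      using bij_betwE[OF up(1)] Cons_zero_in_stage_zero by blast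
    then have "stage_up_iter n (0 # \<sigma>) = 0 # Wstar_to_X n \<sigma> @ [2*n+1]" and "Wstar_to_X n \<sigma> \<in> X_set n"
      using unframed_stage_in_X unfolding Wstar_to_X_def by auto
    then have "desc_count (stage_up_iter n (0 # \<sigma>)) = desc_count (Wstar_to_X n \<sigma>)"
      using desc_count_frame[of "Wstar_to_X n \<sigma>" "2*n+1"] unfolding X_set_def perms_def by auto
    then show "des (Wstar_to_X n \<sigma>) = des \<sigma>"
      using up(2) Cons_zero_in_stage_zero[OF \<sigma>] by (simp add: des_eq_desc_count desc_count_Cons)
  qed
qed

theorem mainTheorem9:
  fixes n :: nat
  assumes "n \<ge> 1"
  shows "(\<exists>f. bij_betw f (Wstar_set n) (X_set n) \<and> (\<forall>\<sigma>\<in>Wstar_set n. des (f \<sigma>) = des \<sigma>))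
       \<and> (\<forall>t :: 'a :: comm_semiring_1.
            (\<Sum>\<sigma>\<in>Wstar_set n. t ^ des \<sigma>) = (\<Sum>\<sigma>\<in>X_set n. t ^ des \<sigma>))"
proof -
  obtain bij: "bij_betw (Wstar_to_X n) (Wstar_set n) (X_set n)"
    and des: "\<forall>\<sigma>\<in>Wstar_set n. des (Wstar_to_X n \<sigma>) = des \<sigma>"
    using Wstar_to_X_correct by blast
  have "(\<Sum>\<sigma>\<in>Wstar_set n. t ^ des \<sigma>) = (\<Sum>\<sigma>\<in>X_set n. t ^ des \<sigma>)" for t :: 'a
    using sum.reindex_bij_betw[OF bij, of "\<lambda>\<sigma>. t ^ des \<sigma>"] des by simp
  then show ?thesis using bij des by blast
qed

end
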